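(* Let $a,b$ be coprime integers with $|a|\ge b\ge 2$, and let $\mathcal{D}=\{0,1,\ldots,|a|-1\}$. Let $x\in\mathbb{R}$, and if $\tfrac{a}{b}>0$ assume $x>0$. Let $k\in\mathbb{Z}$ and $(d_j)_{j\le k}$ be a sequence in $\mathcal{D}$ with $d_k\neq 0$ such that the series $\sum_{j\le k} d_j\left(\tfrac{a}{b}\right)^j$ converges to $x$ in $\mathbb{C}$. Then this series is an $\tfrac{a}{b}$-expansion of $x$ if and only if it converges to $0$ in $\mathbb{Q}_p$ for every prime $p$ dividing $b$.
   Context: An $\tfrac{a}{b}$-expansion of $x$ is an expression $x=\sum_{j\le k} d_j\left(\tfrac{a}{b}\right)^j$ with $d_j\in\mathcal{D}$ and $d_k\neq 0$ such that for every integer $l\le k$ the number $N_l:=\sum_{j=l}^{k} d_j\left(\tfrac{a}{b}\right)^{j-l}$ lies in $b\mathbb{Z}$ (equivalently, $d_k\ldots d_l$ is the integer $\tfrac ab$-expansion of an element of $b\mathbb{Z}$, obtained by repeatedly applying the map $b\mathbb{Z}\to b\mathbb{Z}$, $N\mapsto \tfrac{b}{a}(N-d)$ with $d\in\mathcal{D}$ the unique digit making the result lie in $b\mathbb{Z}$, until reaching $0$). $\mathbb{Q}_p$ denotes the field of $p$-adic numbers. *)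

theory Defs
  imports Complex_Main "HOL-Computational_Algebra.Primes"
begin

definition digits :: "int \<Rightarrow> int set" where
  "digits a = {0..\<bar>a\<bar> - 1}"

definition partial_sum :: "int \<Rightarrow> int \<Rightarrow> int \<Rightarrow> (int \<Rightarrow> int) \<Rightarrow> nat \<Rightarrow> 'f::field" where
  "partial_sum a b k d n =
     (\<Sum>j\<in>{k - int n..k}. of_int (d j) * (of_int a / of_int b) powi j)"

definition ab_expansion :: "int \<Rightarrow> int \<Rightarrow> int \<Rightarrow> (int \<Rightarrow> int) \<Rightarrow> bool" where
  "ab_expansion a b k d \<longleftrightarrow>
     (\<forall>l\<le>k. \<exists>z::int.
        (\<Sum>j\<in>{l..k}. of_int (d j) * (of_int a / of_int b :: rat) ^ nat (j - l)) = of_int (b * z))"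

definition padic_val_rat :: "int \<Rightarrow> rat \<Rightarrow> int" where
  "padic_val_rat p q = (case quotient_of q of (n, m) \<Rightarrow>
      int (multiplicity p n) - int (multiplicity p m))"

definition padic_abs :: "int \<Rightarrow> rat \<Rightarrow> real" where
  "padic_abs p q = (if q = 0 then 0 else real_of_int p powr (- real_of_int (padic_val_rat p q)))"

text \<open>A series of rationals with partial sums S converges to 0 in Q_p iff |S n|_p \<rightarrow> 0.\<close>
definition padic_tendsto_zero :: "int \<Rightarrow> (nat \<Rightarrow> rat) \<Rightarrow> bool" where
  "padic_tendsto_zero p S \<longleftrightarrow> (\<lambda>n. padic_abs p (S n)) \<longlonglongrightarrow> 0"

end

theory Submission imports Defs begin

(* Write N_l = M_l / b^(k-l) with the integer M_l = sum_{j=l}^{k} d_j a^(j-l) b^(k-j); the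
   expansion condition says b^(k-l+1) divides M_l for every l <= k. The n-th partial sum equals
   (a/b)^l N_l for l = k - n, and since p does not divide a, its p-adic valuation is
   v_p(M_l) - k v_p(b). If b^(k-l+1) | M_l for all l, this valuation is at least n + 1 - k v_p(b),
   so the partial sums tend to 0 p-adically. Conversely, if b^(k-l+1) does not divide M_l, some
   prime p | b has v_p(M_l) < v_p(b^(k-l+1)); the recursion M_(l-1) = d_(l-1) b^(k-l+1) + a M_l
   then keeps v_p(M_l') = v_p(M_l) for all l' <= l, so the p-adic absolute values of the partial
   sums are eventually a positive constant. *)

definition tail_numerator :: "int \<Rightarrow> int \<Rightarrow> int \<Rightarrow> (int \<Rightarrow> int) \<Rightarrow> int \<Rightarrow> int" where
  "tail_numerator a b k d l = (\<Sum>j\<in>{l..k}. d j * a ^ nat (j - l) * b ^ nat (k - j))"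

lemma tail_sum_eq_tail_numerator:
  assumes "b \<noteq> 0"
  shows "(\<Sum>j\<in>{l..k}. of_int (d j) * (of_int a / of_int b :: 'f::field_char_0) ^ nat (j - l))
     = of_int (tail_numerator a b k d l) / of_int b ^ nat (k - l)"
proof -
  have "(\<Sum>j\<in>{l..k}. of_int (d j) * (of_int a / of_int b :: 'f) ^ nat (j - l))
     = (\<Sum>j\<in>{l..k}. of_int (d j * a ^ nat (j - l) * b ^ nat (k - j)) / of_int b ^ nat (k - l))"
  proof (rule sum.cong)
    fix j assume "j \<in> {l..k}"
    then have "nat (k - l) = nat (k - j) + nat (j - l)" by auto
    then have "(of_int b :: 'f) ^ nat (k - l) = of_int b ^ nat (k - j) * of_int b ^ nat (j - l)"
      by (simp add: power_add)
    with assms show "of_int (d j) * (of_int a / of_int b :: 'f) ^ nat (j - l) =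
        of_int (d j * a ^ nat (j - l) * b ^ nat (k - j)) / of_int b ^ nat (k - l)"
      by (simp add: power_divide field_simps)
  qed simp
  then show ?thesis
    unfolding tail_numerator_def by (simp add: sum_divide_distrib)
qed

lemma ab_expansion_iff_dvd_tail_numerator:
  assumes "b \<noteq> 0"
  shows "ab_expansion a b k d \<longleftrightarrow> (\<forall>l\<le>k. b ^ Suc (nat (k - l)) dvd tail_numerator a b k d l)"
proof -
  have "(of_int M / of_int b ^ n :: rat) = of_int (b * z) \<longleftrightarrow> M = b ^ Suc n * z"
    for M z :: int and n
  proof -
    have "(of_int M / of_int b ^ n :: rat) = of_int (b * z) \<longleftrightarrow>
        (of_int M :: rat) = of_int (b ^ Suc n * z)"
      using assms by (simp add: field_simps)
    then show ?thesis by (simp only: of_int_eq_iff)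
  qed
  then show ?thesis
    unfolding ab_expansion_def tail_sum_eq_tail_numerator[OF assms] by (auto simp: dvd_def)
qed

lemma tail_numerator_step:
  assumes "l \<le> k"
  shows "tail_numerator a b k d (l - 1) =
           d (l - 1) * b ^ Suc (nat (k - l)) + a * tail_numerator a b k d l"
proof -
  have "{l - 1..k} = insert (l - 1) {l..k}" and "nat (k - (l - 1)) = Suc (nat (k - l))"
    using assms by auto
  then have "tail_numerator a b k d (l - 1) = d (l - 1) * b ^ Suc (nat (k - l))
      + (\<Sum>j\<in>{l..k}. d j * a ^ nat (j - (l - 1)) * b ^ nat (k - j))"
    unfolding tail_numerator_def by simp
  also have "(\<Sum>j\<in>{l..k}. d j * a ^ nat (j - (l - 1)) * b ^ nat (k - j))
      = (\<Sum>j\<in>{l..k}. a * (d j * a ^ nat (j - l) * b ^ nat (k - j)))"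
  proof (rule sum.cong)
    fix j assume "j \<in> {l..k}"
    then have "nat (j - (l - 1)) = Suc (nat (j - l))" by auto
    then show "d j * a ^ nat (j - (l - 1)) * b ^ nat (k - j) =
        a * (d j * a ^ nat (j - l) * b ^ nat (k - j))"
      by simp
  qed simp
  finally show ?thesis
    unfolding tail_numerator_def by (simp add: sum_distrib_left)
qed

lemma partial_sum_eq_power_int_times_tail:
  assumes "a \<noteq> 0" "b \<noteq> 0"
  shows "(partial_sum a b k d n :: 'f::field_char_0) = (of_int a / of_int b) powi (k - int n) *
           (of_int (tail_numerator a b k d (k - int n)) / of_int b ^ n)"
proof -
  let ?l = "k - int n" and ?r = "of_int a / of_int b :: 'f"
  have "partial_sum a b k d n =
      (\<Sum>j\<in>{?l..k}. ?r powi ?l * (of_int (d j) * ?r ^ nat (j - ?l)))"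
    unfolding partial_sum_def
  proof (rule sum.cong)
    fix j assume "j \<in> {?l..k}"
    then have "?r powi j = ?r powi (?l + int (nat (j - ?l)))" by simp
    also have "\<dots> = ?r powi ?l * ?r powi int (nat (j - ?l))"
      using assms by (intro power_int_add) simp
    also have "\<dots> = ?r powi ?l * ?r ^ nat (j - ?l)"
      by (simp only: power_int_of_nat)
    finally show "of_int (d j) * ?r powi j = ?r powi ?l * (of_int (d j) * ?r ^ nat (j - ?l))"
      by simp
  qed simp
  also have "\<dots> = ?r powi ?l * (\<Sum>j\<in>{?l..k}. of_int (d j) * ?r ^ nat (j - ?l))"
    by (simp only: sum_distrib_left)
  also have "\<dots> = ?r powi ?l * (of_int (tail_numerator a b k d ?l) / of_int b ^ nat (k - ?l))"
    by (simp only: tail_sum_eq_tail_numerator[OF assms(2)])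
  finally show ?thesis by simp
qed

lemma power_int_fraction_of_int:
  assumes "a \<noteq> 0"
  shows "(of_int a / of_int b :: 'f::field_char_0) powi l =
           of_int (a ^ nat l * b ^ nat (- l)) / of_int (b ^ nat l * a ^ nat (- l))"
proof (cases "l \<ge> 0")
  case True
  then obtain m where "l = int m" by (metis nonneg_eq_int)
  then show ?thesis by (simp add: power_int_of_nat power_divide)
next
  case False
  then obtain m where "l = - int m" by (metis nle_le nonpos_int_cases)
  with assms show ?thesis by (simp add: power_int_minus power_int_of_nat power_divide)
qed

lemma padic_val_rat_of_int_div:
  fixes p x y :: int
  assumes "prime p" "x \<noteq> 0" "y \<noteq> 0"
  shows "padic_val_rat p (of_int x / of_int y) = int (multiplicity p x) - int (multiplicity p y)"
proof -
  obtain n m where q: "quotient_of (of_int x / of_int y) = (n, m)"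
    by (cases "quotient_of (of_int x / of_int y)")
  have "m > 0" using quotient_of_denom_pos[OF q] .
  moreover have "(of_int x / of_int y :: rat) = of_int n / of_int m"
    using quotient_of_div[OF q] .
  ultimately have "(of_int (x * m) :: rat) = of_int (n * y)"
    using assms by (simp add: field_simps)
  then have eq: "x * m = n * y" by (simp only: of_int_eq_iff)
  with assms \<open>m > 0\<close> have "n \<noteq> 0" by auto
  from eq have "multiplicity p x + multiplicity p m = multiplicity p n + multiplicity p y"
    using assms \<open>m > 0\<close> \<open>n \<noteq> 0\<close>
    by (metis prime_imp_prime_elem prime_elem_multiplicity_mult_distrib less_irrefl)
  then show ?thesis unfolding padic_val_rat_def q by simp
qed

lemma padic_abs_partial_sum:
  fixes p :: int
  assumes "prime p" "\<not> p dvd a" "a \<noteq> 0" "b \<noteq> 0"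
    and "tail_numerator a b k d (k - int n) \<noteq> 0"
  shows "padic_abs p (partial_sum a b k d n) = real_of_int p powr
      (real_of_int (k * int (multiplicity p b)) - multiplicity p (tail_numerator a b k d (k - int n)))"
proof -
  define l where "l = k - int n"
  define M where "M = tail_numerator a b k d l"
  define X where "X = a ^ nat l * b ^ nat (- l) * M"
  define Y where "Y = b ^ nat l * a ^ nat (- l) * b ^ n"
  have "M \<noteq> 0" using assms(5) unfolding M_def l_def .
  then have "X \<noteq> 0" "Y \<noteq> 0" unfolding X_def Y_def using assms(3,4) by simp_all
  have psum: "(partial_sum a b k d n :: rat) = of_int X / of_int Y"
    unfolding partial_sum_eq_power_int_times_tail[OF assms(3,4)]
      power_int_fraction_of_int[OF assms(3)] l_def[symmetric] M_def[symmetric] X_def Y_def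
    by simp
  have pe: "prime_elem p" using assms(1) by (rule prime_imp_prime_elem)
  have "multiplicity p a = 0" using assms(2) by (rule not_dvd_imp_multiplicity_0)
  then have "multiplicity p X = nat (- l) * multiplicity p b + multiplicity p M"
    and "multiplicity p Y = nat l * multiplicity p b + n * multiplicity p b"
    unfolding X_def Y_def using pe assms(3,4) \<open>M \<noteq> 0\<close>
    by (simp_all add: prime_elem_multiplicity_mult_distrib prime_elem_multiplicity_power_distrib)
  then have "padic_val_rat p (partial_sum a b k d n) =
      int (multiplicity p M) - k * int (multiplicity p b)"
    unfolding psum padic_val_rat_of_int_div[OF assms(1) \<open>X \<noteq> 0\<close> \<open>Y \<noteq> 0\<close>] l_def
    by (cases "k \<ge> int n") (simp_all add: algebra_simps)
  moreover have "(partial_sum a b k d n :: rat) \<noteq> 0"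
    unfolding psum using \<open>X \<noteq> 0\<close> \<open>Y \<noteq> 0\<close> by simp
  ultimately show ?thesis
    unfolding padic_abs_def M_def l_def by simp
qed

lemma multiplicity_add_eq_right:
  fixes p x y :: int
  assumes "prime p" "y \<noteq> 0" "p ^ Suc (multiplicity p y) dvd x"
  shows "x + y \<noteq> 0 \<and> multiplicity p (x + y) = multiplicity p y"
proof -
  let ?c = "multiplicity p y"
  have "\<not> p ^ Suc ?c dvd y"
  proof
    assume "p ^ Suc ?c dvd y"
    then have "Suc ?c \<le> ?c" using assms(1,2) by (intro multiplicity_geI) auto
    then show False by simp
  qed
  then have nsuc: "\<not> p ^ Suc ?c dvd x + y" using assms(3) by (simp add: dvd_add_right_iff)
  have "p ^ ?c dvd x"
    using dvd_trans[OF le_imp_power_dvd[of ?c "Suc ?c" p] assms(3)] by simp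
  then have "p ^ ?c dvd x + y" using multiplicity_dvd by (rule dvd_add)
  from multiplicity_eqI[OF this nsuc] nsuc show ?thesis by auto
qed

lemma multiplicity_tail_numerator_stable:
  fixes p :: int
  assumes "prime p" "\<not> p dvd a" "l \<le> k" "tail_numerator a b k d l \<noteq> 0"
    and small: "multiplicity p (tail_numerator a b k d l) < multiplicity p (b ^ Suc (nat (k - l)))"
  shows "tail_numerator a b k d (l - int t) \<noteq> 0 \<and>
    multiplicity p (tail_numerator a b k d (l - int t)) = multiplicity p (tail_numerator a b k d l)"
proof (induction t)
  case 0
  with assms show ?case by simp
next
  case (Suc t)
  let ?M = "tail_numerator a b k d" and ?c = "multiplicity p (tail_numerator a b k d l)"
  let ?x = "d (l - int t - 1) * b ^ Suc (nat (k - (l - int t)))" and ?y = "a * ?M (l - int t)"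
  have "a \<noteq> 0" using assms(2) by auto
  with Suc.IH have "?y \<noteq> 0" by simp
  have "multiplicity p ?y = ?c"
    using Suc.IH \<open>a \<noteq> 0\<close> not_dvd_imp_multiplicity_0[OF assms(2)]
      prime_elem_multiplicity_mult_distrib[OF prime_imp_prime_elem[OF assms(1)]]
    by simp
  have "p ^ Suc ?c dvd b ^ Suc (nat (k - l))"
    using small by (intro multiplicity_dvd') simp
  also have "\<dots> dvd b ^ Suc (nat (k - (l - int t)))"
    using assms(3) by (intro le_imp_power_dvd) simp
  finally have "p ^ Suc (multiplicity p ?y) dvd ?x"
    unfolding \<open>multiplicity p ?y = ?c\<close> by simp
  then have "?x + ?y \<noteq> 0 \<and> multiplicity p (?x + ?y) = ?c"
    using multiplicity_add_eq_right[OF assms(1) \<open>?y \<noteq> 0\<close>] \<open>multiplicity p ?y = ?c\<close> by simp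
  moreover have "?M (l - int (Suc t)) = ?x + ?y"
  proof -
    have "l - int (Suc t) = l - int t - 1" by simp
    moreover have "?M (l - int t - 1) = ?x + ?y"
      using assms(3) by (intro tail_numerator_step) simp
    ultimately show ?thesis by (simp only:)
  qed
  ultimately show ?case by simp
qed

lemma tendsto_powr_minus_real_nat:
  fixes p :: real
  assumes "p > 1"
  shows "(\<lambda>n. p powr (c - real n)) \<longlonglongrightarrow> 0"
proof -
  have "(\<lambda>n. p powr c * inverse (p ^ n)) \<longlonglongrightarrow> 0"
    using assms by (intro tendsto_mult_right_zero LIMSEQ_inverse_realpow_zero) simp
  moreover have "p powr (c - real n) = p powr c * inverse (p ^ n)" for n
    using assms by (simp add: powr_diff powr_realpow divide_inverse)
  ultimately show ?thesis by simp
qed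

lemma padic_tendsto_zero_partial_sum_if_ab_expansion:
  fixes p :: int
  assumes "coprime a b" "a \<noteq> 0" "b \<noteq> 0" "prime p" "p dvd b" "ab_expansion a b k d"
  shows "padic_tendsto_zero p (\<lambda>n. partial_sum a b k d n :: rat)"
proof -
  have "\<not> p dvd a"
    using assms(1,4,5) coprime_common_divisor not_prime_unit by blast
  define e where "e = real_of_int (k * int (multiplicity p b))"
  have dvd_tail: "b ^ Suc (nat (k - l)) dvd tail_numerator a b k d l" if "l \<le> k" for l
    using assms(6) that unfolding ab_expansion_iff_dvd_tail_numerator[OF assms(3)] by blast
  have p: "real_of_int p > 1" using prime_gt_1_int[OF assms(4)] by simp
  have bound: "padic_abs p (partial_sum a b k d n) \<le> real_of_int p powr ((e - 1) - real n)" for n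
  proof (cases "tail_numerator a b k d (k - int n) = 0")
    case True
    then show ?thesis
      unfolding partial_sum_eq_power_int_times_tail[OF assms(2,3)] padic_abs_def by simp
  next
    case False
    have "p ^ Suc n dvd b ^ Suc n" using assms(5) by (rule dvd_power_same)
    also have "b ^ Suc n dvd tail_numerator a b k d (k - int n)"
      using dvd_tail[of "k - int n"] by simp
    finally have "Suc n \<le> multiplicity p (tail_numerator a b k d (k - int n))"
      using False assms(4) by (intro multiplicity_geI) auto
    then show ?thesis
      unfolding padic_abs_partial_sum[OF assms(4) \<open>\<not> p dvd a\<close> assms(2,3) False] e_def[symmetric]
      using p by (intro powr_mono) auto
  qed
  show ?thesis
    unfolding padic_tendsto_zero_def
  proof (rule tendsto_sandwich[OF _ _ tendsto_const tendsto_powr_minus_real_nat[OF p]])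
    show "\<forall>\<^sub>F n in sequentially. 0 \<le> padic_abs p (partial_sum a b k d n)"
      by (simp add: padic_abs_def)
    show "\<forall>\<^sub>F n in sequentially. padic_abs p (partial_sum a b k d n) \<le>
        real_of_int p powr ((e - 1) - real n)"
      using bound by simp
  qed
qed

lemma ab_expansion_if_padic_tendsto_zero_partial_sum:
  assumes "coprime a b" "a \<noteq> 0" "b \<noteq> 0"
    and "\<forall>p::int. prime p \<and> p dvd b \<longrightarrow> padic_tendsto_zero p (\<lambda>n. partial_sum a b k d n :: rat)"
  shows "ab_expansion a b k d"
proof (rule ccontr)
  let ?M = "tail_numerator a b k d"
  assume "\<not> ab_expansion a b k d"
  then obtain l where "l \<le> k" and ndvd: "\<not> b ^ Suc (nat (k - l)) dvd ?M l"
    unfolding ab_expansion_iff_dvd_tail_numerator[OF assms(3)] by blast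
  then have "?M l \<noteq> 0" by auto
  have "\<not> (\<forall>p. prime p \<longrightarrow> multiplicity p (b ^ Suc (nat (k - l))) \<le> multiplicity p (?M l))"
    using ndvd multiplicity_le_imp_dvd[of "b ^ Suc (nat (k - l))" "?M l"] assms(3) by auto
  then obtain p :: int where "prime p"
    and small: "multiplicity p (?M l) < multiplicity p (b ^ Suc (nat (k - l)))"
    by (auto simp: not_le)
  then have "p dvd b ^ Suc (nat (k - l))"
    by (metis not_dvd_imp_multiplicity_0 not_less0)
  then have "p dvd b" by (rule prime_dvd_power[OF \<open>prime p\<close>])
  have "\<not> p dvd a"
    using assms(1) \<open>prime p\<close> \<open>p dvd b\<close> coprime_common_divisor not_prime_unit by blast
  define C where "C = real_of_int p powr
      (real_of_int (k * int (multiplicity p b)) - multiplicity p (?M l))"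
  have "\<forall>\<^sub>F n in sequentially. padic_abs p (partial_sum a b k d n) = C"
  proof (rule eventually_sequentiallyI)
    fix n assume "nat (k - l) \<le> n"
    then have "k - int n = l - int (n - nat (k - l))" using \<open>l \<le> k\<close> by simp
    then have "?M (k - int n) \<noteq> 0 \<and> multiplicity p (?M (k - int n)) = multiplicity p (?M l)"
      using multiplicity_tail_numerator_stable[OF \<open>prime p\<close> \<open>\<not> p dvd a\<close> \<open>l \<le> k\<close> \<open>?M l \<noteq> 0\<close> small]
      by (simp only: simp_thms)
    then show "padic_abs p (partial_sum a b k d n) = C"
      unfolding C_def using padic_abs_partial_sum[OF \<open>prime p\<close> \<open>\<not> p dvd a\<close> assms(2,3)] by simp
  qed
  moreover have "(\<lambda>n. padic_abs p (partial_sum a b k d n)) \<longlonglongrightarrow> 0"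
    using assms(4) \<open>prime p\<close> \<open>p dvd b\<close> unfolding padic_tendsto_zero_def by blast
  ultimately have "(\<lambda>n. C) \<longlonglongrightarrow> 0"
    by (rule Lim_transform_eventually[rotated])
  then have "C = 0" by (rule LIMSEQ_const_iff[THEN iffD1])
  moreover have "C > 0"
    unfolding C_def using prime_gt_0_int[OF \<open>prime p\<close>] by simp
  ultimately show False by simp
qed

theorem mainTheorem2:
  fixes a b k :: int and x :: real and d :: "int \<Rightarrow> int"
  assumes "coprime a b" and "\<bar>a\<bar> \<ge> b" and "b \<ge> 2"
    and "real_of_int a / real_of_int b > 0 \<Longrightarrow> x > 0"
    and "\<And>j. j \<le> k \<Longrightarrow> d j \<in> digits a"
    and "d k \<noteq> 0"
    and "(\<lambda>n. partial_sum a b k d n :: real) \<longlonglongrightarrow> x"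
  shows "ab_expansion a b k d \<longleftrightarrow>
           (\<forall>p::int. prime p \<and> p dvd b \<longrightarrow>
              padic_tendsto_zero p (\<lambda>n. partial_sum a b k d n :: rat))"
proof -
  have "a \<noteq> 0" "b \<noteq> 0" using assms(2,3) by auto
  show ?thesis
  proof
    show "\<forall>p::int. prime p \<and> p dvd b \<longrightarrow> padic_tendsto_zero p (\<lambda>n. partial_sum a b k d n :: rat)"
      if "ab_expansion a b k d"
      using padic_tendsto_zero_partial_sum_if_ab_expansion[OF assms(1) \<open>a \<noteq> 0\<close> \<open>b \<noteq> 0\<close> _ _ that]
      by blast
  qed (rule ab_expansion_if_padic_tendsto_zero_partial_sum[OF assms(1) \<open>a \<noteq> 0\<close> \<open>b \<noteq> 0\<close>])
qed

end
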